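(* Let $A,A^*$ be a Leonard pair in $\mathcal A$. Then there exists a unique antiautomorphism $\dagger$ of $\mathcal A$ such that $A^\dagger=A$ and $A^{*\dagger}=A^*$. Moreover $X^{\dagger\dagger}=X$ for all $X\in\mathcal A$.
   Context: Let $\mathbb K$ be a field, $d\ge0$, and $\mathcal A$ a $\mathbb K$-algebra isomorphic to $\mathrm{Mat}_{d+1}(\mathbb K)$. A Leonard pair in $\mathcal A$ is an ordered pair $A,A^*\in\mathcal A$ ($A^*$ is notation, not an adjoint) that acts on an irreducible (left) $\mathcal A$-module $V$ as follows: (a) some basis of $V$ makes the matrix of $A$ irreducible tridiagonal (tridiagonal with all sub- and superdiagonal entries nonzero) and the matrix of $A^*$ diagonal, and (b) some basis of $V$ makes the matrix of $A^*$ irreducible tridiagonal and that of $A$ diagonal. An antiautomorphism of $\mathcal A$ is a $\mathbb K$-linear bijection $\gamma:\mathcal A\to\mathcal A$ with $(XY)^\gamma=Y^\gamma X^\gamma$ for all $X,Y$. *)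

theory Defs
  imports "Jordan_Normal_Form.Matrix"
begin

text \<open>The algebra \<A> is realised as Mat_{d+1}(K) = carrier_mat (d+1) (d+1), acting on its
  natural irreducible module V = K^{d+1} (column vectors).\<close>

definition irred_tridiagonal :: "'a::zero mat \<Rightarrow> bool" where
  "irred_tridiagonal T \<longleftrightarrow>
     (\<forall>i<dim_row T. \<forall>j<dim_col T. (i + 1 < j \<or> j + 1 < i) \<longrightarrow> T $$ (i, j) = 0) \<and>
     (\<forall>i. i + 1 < dim_row T \<longrightarrow> T $$ (i + 1, i) \<noteq> 0 \<and> T $$ (i, i + 1) \<noteq> 0)"

text \<open>The matrix of X w.r.t. the basis of K^n given by the columns of an invertible P
  (with inverse Q) is Q * X * P.\<close>

definition leonard_pair :: "nat \<Rightarrow> 'a::field mat \<Rightarrow> 'a mat \<Rightarrow> bool" where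
  "leonard_pair n A As \<longleftrightarrow>
     A \<in> carrier_mat n n \<and> As \<in> carrier_mat n n \<and>
     (\<exists>P Q. P \<in> carrier_mat n n \<and> Q \<in> carrier_mat n n \<and> inverts_mat P Q \<and> inverts_mat Q P \<and>
        irred_tridiagonal (Q * A * P) \<and> diagonal_mat (Q * As * P)) \<and>
     (\<exists>P Q. P \<in> carrier_mat n n \<and> Q \<in> carrier_mat n n \<and> inverts_mat P Q \<and> inverts_mat Q P \<and>
        irred_tridiagonal (Q * As * P) \<and> diagonal_mat (Q * A * P))"

definition antiautomorphism :: "nat \<Rightarrow> ('a::field mat \<Rightarrow> 'a mat) \<Rightarrow> bool" where
  "antiautomorphism n g \<longleftrightarrow>
     bij_betw g (carrier_mat n n) (carrier_mat n n) \<and>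
     (\<forall>X\<in>carrier_mat n n. \<forall>Y\<in>carrier_mat n n. g (X + Y) = g X + g Y) \<and>
     (\<forall>c. \<forall>X\<in>carrier_mat n n. g (c \<cdot>\<^sub>m X) = c \<cdot>\<^sub>m g X) \<and>
     (\<forall>X\<in>carrier_mat n n. \<forall>Y\<in>carrier_mat n n. g (X * Y) = g Y * g X)"

end

theory Submission
  imports Defs
begin

(* In a basis in which A is an irreducible tridiagonal matrix T and A* is diagonal, the diagonal
   matrix M with M(i+1,i+1) / M(i,i) = T(i+1,i) / T(i,i+1) satisfies M T^T = T M and commutes with
   every diagonal matrix. Transported back to the original basis it gives a symmetric invertible R
   with R A^T = A R and R A*^T = A* R, and X |-> R X^T R^-1 is an involutive antiautomorphism
   fixing A and A*.

   For uniqueness it suffices that A and A* generate the whole matrix algebra. An eigenvector of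
   an irreducible tridiagonal matrix is determined by its first entry, so its eigenspaces are
   lines; since A* is irreducible tridiagonal in some basis, the diagonal form D of A* has distinct
   entries. Hence every matrix unit E(i,i) is a polynomial in D (Lagrange interpolation),
   E(i,i+1) and E(i+1,i) are multiples of E(i,i) T E(i+1,i+1) and E(i+1,i+1) T E(i,i), and their
   products give all E(i,j). *)

lemma transpose_smult_mat: "(c \<cdot>\<^sub>m X)\<^sup>T = c \<cdot>\<^sub>m X\<^sup>T"
  by (intro eq_matI) auto

lemma inverse_mult_cancel_left:
  fixes A B C :: "'a::semiring_1 mat"
  assumes "A \<in> carrier_mat n n" "B \<in> carrier_mat n n" "C \<in> carrier_mat n m" "A * B = 1\<^sub>m n"
  shows "A * (B * C) = C"
  using assms by (simp flip: assoc_mult_mat[of A n n B n C m])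

lemma conj_mult_cancel:
  fixes P Q X :: "'a::semiring_1 mat"
  assumes "P \<in> carrier_mat n n" "Q \<in> carrier_mat n n" "X \<in> carrier_mat n n" "P * Q = 1\<^sub>m n"
  shows "P * (Q * X * P) * Q = X"
  using assms by (simp add: assoc_mult_mat[of _ n n _ n _ n] inverse_mult_cancel_left[of P n Q _ n])

lemma transpose_mat_diag [simp]: "(mat_diag n f)\<^sup>T = mat_diag n f"
  by (intro eq_matI) (auto simp: mat_diag_def)

lemma mat_diag_mult_mat_diag_inverse:
  fixes f :: "nat \<Rightarrow> 'a::field"
  assumes "\<And>i. i < n \<Longrightarrow> f i \<noteq> 0"
  shows "mat_diag n f * mat_diag n (\<lambda>i. 1 / f i) = 1\<^sub>m n"
    and "mat_diag n (\<lambda>i. 1 / f i) * mat_diag n f = 1\<^sub>m n"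
  unfolding mat_diag_diag using assms by (auto simp: mat_diag_def intro!: eq_matI)

lemma diagonal_mat_eq_mat_diag:
  assumes "D \<in> carrier_mat n n" "diagonal_mat D"
  shows "D = mat_diag n (\<lambda>i. D $$ (i, i))"
  using assms by (intro eq_matI) (auto simp: mat_diag_def diagonal_mat_def)

lemma diagonal_mat_mult_vec:
  fixes D :: "'a::semiring_1 mat"
  assumes D: "D \<in> carrier_mat n n" "diagonal_mat D" and v: "v \<in> carrier_vec n"
  shows "D *\<^sub>v v = vec n (\<lambda>k. D $$ (k, k) * v $ k)"
proof (rule eq_vecI)
  fix i assume "i < dim_vec (vec n (\<lambda>k. D $$ (k, k) * v $ k))"
  then have i: "i < n" by simp
  have "(D *\<^sub>v v) $ i = (\<Sum>l\<in>{0..<n}. D $$ (i, l) * v $ l)"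
    using D v i by (simp add: scalar_prod_def)
  also have "\<dots> = (\<Sum>l\<in>{0..<n}. if l = i then D $$ (i, i) * v $ i else 0)"
    using D i unfolding diagonal_mat_def by (intro sum.cong) auto
  finally show "(D *\<^sub>v v) $ i = vec n (\<lambda>k. D $$ (k, k) * v $ k) $ i"
    using i by simp
qed (use D in auto)

definition mat_unit :: "nat \<Rightarrow> nat \<Rightarrow> nat \<Rightarrow> 'a::{zero,one} mat" where
  "mat_unit n i j = mat n n (\<lambda>(k, l). if k = i \<and> l = j then 1 else 0)"

lemma mat_unit_carrier [simp]: "mat_unit n i j \<in> carrier_mat n n"
  by (simp add: mat_unit_def)

lemma mat_unit_mult_mat_unit:
  assumes "j < n"
  shows "mat_unit n i j * mat_unit n j k = (mat_unit n i k :: 'a::semiring_1 mat)"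
  using assms by (intro eq_matI) (auto simp: mat_unit_def scalar_prod_def if_distrib[of "\<lambda>x. x * _"] cong: if_cong)

lemma mat_diag_indicator_eq_mat_unit: "mat_diag n (\<lambda>l. if l = i then 1 else 0) = mat_unit n i i"
  by (intro eq_matI) (auto simp: mat_diag_def mat_unit_def)

lemma mat_unit_mult_mult_mat_unit:
  fixes X :: "'a::semiring_1 mat"
  assumes "X \<in> carrier_mat n n"
  shows "mat_unit n i i * X * mat_unit n j j = X $$ (i, j) \<cdot>\<^sub>m mat_unit n i j"
  unfolding mat_diag_indicator_eq_mat_unit[symmetric] using assms
  by (subst mat_diag_mult_left[of _ n n], simp, subst mat_diag_mult_right[of _ n n], simp)
    (intro eq_matI, auto simp: mat_diag_def mat_unit_def)

inductive_set mat_alg_generate :: "nat \<Rightarrow> 'a::comm_ring_1 mat \<Rightarrow> 'a mat \<Rightarrow> 'a mat set"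
  for n A B where
  one: "1\<^sub>m n \<in> mat_alg_generate n A B"
| gen_A: "A \<in> mat_alg_generate n A B"
| gen_B: "B \<in> mat_alg_generate n A B"
| add: "X \<in> mat_alg_generate n A B \<Longrightarrow> Y \<in> mat_alg_generate n A B \<Longrightarrow> X + Y \<in> mat_alg_generate n A B"
| smult: "X \<in> mat_alg_generate n A B \<Longrightarrow> c \<cdot>\<^sub>m X \<in> mat_alg_generate n A B"
| mult: "X \<in> mat_alg_generate n A B \<Longrightarrow> Y \<in> mat_alg_generate n A B \<Longrightarrow> X * Y \<in> mat_alg_generate n A B"

lemma mat_alg_generate_carrier:
  assumes "A \<in> carrier_mat n n" "B \<in> carrier_mat n n" "X \<in> mat_alg_generate n A B"
  shows "X \<in> carrier_mat n n"
  using assms(3) by induction (use assms(1,2) in auto)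

lemma mat_alg_generate_conj:
  fixes P Q :: "'a::comm_ring_1 mat"
  assumes carr: "P \<in> carrier_mat n n" "Q \<in> carrier_mat n n" "A \<in> carrier_mat n n" "B \<in> carrier_mat n n"
    and inv: "P * Q = 1\<^sub>m n" "Q * P = 1\<^sub>m n"
    and "Y \<in> mat_alg_generate n A B"
  shows "P * Y * Q \<in> mat_alg_generate n (P * A * Q) (P * B * Q)"
  using assms(7)
proof induction
  case (add X Y)
  then have "X \<in> carrier_mat n n" "Y \<in> carrier_mat n n"
    using mat_alg_generate_carrier carr by blast+
  then have "P * (X + Y) * Q = P * X * Q + P * Y * Q"
    using carr by (simp add: mult_add_distrib_mat[of _ n n] add_mult_distrib_mat[of _ n n])
  then show ?case using add.IH by (simp add: mat_alg_generate.add)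
next
  case (smult X c)
  then have "X \<in> carrier_mat n n"
    using mat_alg_generate_carrier carr by blast
  then have "P * (c \<cdot>\<^sub>m X) * Q = c \<cdot>\<^sub>m (P * X * Q)"
    using carr by (simp add: mult_smult_distrib[of _ n n] mult_smult_assoc_mat[of _ n n])
  then show ?case using smult.IH by (simp add: mat_alg_generate.smult)
next
  case (mult X Y)
  then have XY: "X \<in> carrier_mat n n" "Y \<in> carrier_mat n n"
    using mat_alg_generate_carrier carr by blast+
  have "P * (X * Y) * Q = P * X * (Q * P) * Y * Q"
    using carr inv XY by (simp add: assoc_mult_mat[of _ n n _ n _ n])
  also have "\<dots> = (P * X * Q) * (P * Y * Q)"
    using carr XY by (simp add: assoc_mult_mat[of _ n n _ n _ n])
  finally show ?case using mult.IH by (simp add: mat_alg_generate.mult)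
qed (use carr inv in \<open>simp_all add: mat_alg_generate.intros\<close>)

lemma carrier_mat_subset_mat_alg_generate:
  assumes units: "\<And>i j. i < n \<Longrightarrow> j < n \<Longrightarrow> mat_unit n i j \<in> mat_alg_generate n A B"
  shows "carrier_mat n n \<subseteq> mat_alg_generate n A B"
proof
  fix X :: "'a mat" assume X: "X \<in> carrier_mat n n"
  define restr where "restr S = mat n n (\<lambda>ij. if ij \<in> S then X $$ ij else 0)" for S
  have "restr S \<in> mat_alg_generate n A B" if "finite S" "S \<subseteq> {..<n} \<times> {..<n}" for S
    using that
  proof (induction S rule: finite_induct)
    case empty
    have "restr {} = 0 \<cdot>\<^sub>m 1\<^sub>m n"
      by (intro eq_matI) (auto simp: restr_def)
    then show ?case by (simp add: mat_alg_generate.intros)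
  next
    case (insert ij S)
    obtain i j where ij: "ij = (i, j)" by fastforce
    have "restr (insert ij S) = restr S + X $$ (i, j) \<cdot>\<^sub>m mat_unit n i j"
      using insert.hyps by (intro eq_matI) (auto simp: restr_def mat_unit_def ij)
    then show ?case
      using insert units ij by (simp add: mat_alg_generate.intros)
  qed
  moreover have "restr ({..<n} \<times> {..<n}) = X"
    using X by (intro eq_matI) (auto simp: restr_def)
  ultimately show "X \<in> mat_alg_generate n A B" by force
qed

lemma antiautomorphism_carrier:
  assumes "antiautomorphism n h" "X \<in> carrier_mat n n"
  shows "h X \<in> carrier_mat n n"
  using assms unfolding antiautomorphism_def by (meson bij_betw_apply)

lemma antiautomorphism_one:
  fixes h :: "'a::field mat \<Rightarrow> 'a mat"
  assumes h: "antiautomorphism n h"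
  shows "h (1\<^sub>m n) = 1\<^sub>m n"
proof -
  obtain X where X: "X \<in> carrier_mat n n" "h X = 1\<^sub>m n"
    using h unfolding antiautomorphism_def bij_betw_def by (metis imageE one_carrier_mat)
  have "1\<^sub>m n = h (X * 1\<^sub>m n)" using X by simp
  also have "\<dots> = h (1\<^sub>m n) * 1\<^sub>m n"
    using h X unfolding antiautomorphism_def by (metis one_carrier_mat)
  finally show ?thesis using antiautomorphism_carrier[OF h one_carrier_mat] by simp
qed

lemma antiautomorphisms_eq_on_generate:
  fixes g h :: "'a::field mat \<Rightarrow> 'a mat"
  assumes g: "antiautomorphism n g" and h: "antiautomorphism n h"
    and carr: "A \<in> carrier_mat n n" "B \<in> carrier_mat n n"
    and "g A = h A" "g B = h B" "X \<in> mat_alg_generate n A B"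
  shows "g X = h X"
  using assms(7)
proof induction
  case one
  then show ?case using antiautomorphism_one[OF g] antiautomorphism_one[OF h] by simp
next
  case (add X Y)
  then have "X \<in> carrier_mat n n" "Y \<in> carrier_mat n n"
    using mat_alg_generate_carrier carr by blast+
  then show ?case using add.IH g h unfolding antiautomorphism_def by simp
next
  case (smult X c)
  then have "X \<in> carrier_mat n n"
    using mat_alg_generate_carrier carr by blast
  then show ?case using smult.IH g h unfolding antiautomorphism_def by simp
next
  case (mult X Y)
  then have "X \<in> carrier_mat n n" "Y \<in> carrier_mat n n"
    using mat_alg_generate_carrier carr by blast+
  then show ?case using mult.IH g h unfolding antiautomorphism_def by simp
qed (use assms(5,6) in auto)

lemma irred_tridiagonal_mult_vec_index:
  fixes T :: "'a::semiring_0 mat"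
  assumes T: "T \<in> carrier_mat n n" "irred_tridiagonal T" and x: "x \<in> carrier_vec n"
    and r: "Suc r < n" and x0: "\<And>l. l \<le> r \<Longrightarrow> x $ l = 0"
  shows "(T *\<^sub>v x) $ r = T $$ (r, Suc r) * x $ Suc r"
proof -
  have "(T *\<^sub>v x) $ r = (\<Sum>l\<in>{0..<n}. T $$ (r, l) * x $ l)"
    using T x r by (simp add: scalar_prod_def)
  also have "\<dots> = (\<Sum>l\<in>{Suc r}. T $$ (r, l) * x $ l)"
  proof (rule sum.mono_neutral_right)
    show "\<forall>l\<in>{0..<n} - {Suc r}. T $$ (r, l) * x $ l = 0"
    proof
      fix l assume l: "l \<in> {0..<n} - {Suc r}"
      show "T $$ (r, l) * x $ l = 0"
      proof (cases "l \<le> r")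
        case True
        then show ?thesis using x0 by simp
      next
        case False
        then have "r + 1 < l" using l by auto
        then show ?thesis using T l r unfolding irred_tridiagonal_def by auto
      qed
    qed
  qed (use r in auto)
  finally show ?thesis by simp
qed

lemma irred_tridiagonal_eigenvector_eq_0:
  fixes T :: "'a::field mat"
  assumes T: "T \<in> carrier_mat n n" "irred_tridiagonal T"
    and x: "x \<in> carrier_vec n" "T *\<^sub>v x = lam \<cdot>\<^sub>v x" and x0: "x $ 0 = 0"
  shows "x = 0\<^sub>v n"
proof -
  have "x $ k = 0" if "k < n" for k
    using that
  proof (induction k rule: less_induct)
    case (less k)
    show ?case
    proof (cases k)
      case 0
      then show ?thesis using x0 by simp
    next
      case (Suc r)
      have "T $$ (r, k) * x $ k = (T *\<^sub>v x) $ r"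
        using irred_tridiagonal_mult_vec_index[OF T x(1), of r] less Suc by simp
      also have "\<dots> = 0"
        using x less Suc by simp
      finally have "T $$ (r, k) * x $ k = 0" .
      moreover have "T $$ (r, k) \<noteq> 0"
        using T less Suc unfolding irred_tridiagonal_def by auto
      ultimately show ?thesis by simp
    qed
  qed
  then show ?thesis using x(1) by (intro eq_vecI) auto
qed

lemma similar_irred_tridiagonal_diagonal_distinct:
  fixes D T :: "'a::field mat"
  assumes sim: "similar_mat D T" and D: "D \<in> carrier_mat n n" "diagonal_mat D"
    and T: "irred_tridiagonal T" and ab: "a < n" "b < n" "a \<noteq> b"
  shows "D $$ (a, a) \<noteq> D $$ (b, b)"
proof
  assume eq: "D $$ (a, a) = D $$ (b, b)"
  obtain n' S R where sim': "{D, T, S, R} \<subseteq> carrier_mat n' n'"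
    and inv': "S * R = 1\<^sub>m n'" "R * S = 1\<^sub>m n'" and DT: "D = S * T * R"
    using similar_matD[OF sim] by blast
  have "n' = n" using sim' D by auto
  then have carr: "T \<in> carrier_mat n n" "S \<in> carrier_mat n n" "R \<in> carrier_mat n n"
    and inv: "S * R = 1\<^sub>m n" "R * S = 1\<^sub>m n"
    using sim' inv' by auto
  let ?lam = "D $$ (a, a)"
  have "R * D = (R * S) * T * R"
    using carr by (simp add: DT assoc_mult_mat[of _ n n _ n _ n])
  then have TR: "T * R = R * D"
    using carr inv by simp
  \<comment> \<open>R maps eigenvectors of D to eigenvectors of T, which vanish once their first entry does.\<close>
  have vanish: "v = 0\<^sub>v n"
    if v: "v \<in> carrier_vec n" "D *\<^sub>v v = ?lam \<cdot>\<^sub>v v" "row R 0 \<bullet> v = 0" for v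
  proof -
    have "T *\<^sub>v (R *\<^sub>v v) = (R * D) *\<^sub>v v"
      using carr v by (simp flip: TR)
    also have "\<dots> = ?lam \<cdot>\<^sub>v (R *\<^sub>v v)"
      using carr D v by (simp add: mult_mat_vec)
    finally have "T *\<^sub>v (R *\<^sub>v v) = ?lam \<cdot>\<^sub>v (R *\<^sub>v v)" .
    moreover have "(R *\<^sub>v v) $ 0 = 0" using carr v ab by simp
    ultimately have "R *\<^sub>v v = 0\<^sub>v n"
      using carr v by (intro irred_tridiagonal_eigenvector_eq_0[OF carr(1) T]) auto
    then have "(S * R) *\<^sub>v v = 0\<^sub>v n"
      using carr v by auto
    then show ?thesis using inv v by simp
  qed
  define v where "v = vec n (\<lambda>k. if k = a then R $$ (0, b) else if k = b then - R $$ (0, a) else 0)"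
  have v: "v \<in> carrier_vec n" by (simp add: v_def)
  have "row R 0 \<bullet> v = (\<Sum>k\<in>{0..<n}. R $$ (0, k) * v $ k)"
    using carr ab v by (simp add: scalar_prod_def)
  also have "\<dots> = (\<Sum>k\<in>{a, b}. R $$ (0, k) * v $ k)"
    using ab by (intro sum.mono_neutral_right) (auto simp: v_def)
  also have "\<dots> = 0"
    using ab by (simp add: v_def)
  finally have "row R 0 \<bullet> v = 0" .
  moreover have "D *\<^sub>v v = ?lam \<cdot>\<^sub>v v"
    by (rule eq_vecI) (use D v eq in \<open>auto simp: diagonal_mat_mult_vec v_def\<close>)
  ultimately have "v = 0\<^sub>v n"
    using v vanish by blast
  moreover have "v $ a = R $$ (0, b)"
    using ab by (simp add: v_def)
  ultimately have "row R 0 \<bullet> unit_vec n b = 0"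
    using carr ab by simp
  moreover have "D *\<^sub>v unit_vec n b = ?lam \<cdot>\<^sub>v unit_vec n b"
    by (rule eq_vecI) (use D ab eq in \<open>auto simp: diagonal_mat_mult_vec\<close>)
  ultimately have "unit_vec n b = (0\<^sub>v n :: 'a vec)"
    using vanish unit_vec_carrier by blast
  then show False using ab by simp
qed

lemma mat_alg_generate_mat_diag_prod:
  fixes d :: "nat \<Rightarrow> 'a::comm_ring_1"
  assumes "finite J"
  shows "mat_diag n (\<lambda>l. \<Prod>j\<in>J. d l - d j) \<in> mat_alg_generate n T (mat_diag n d)"
  using assms
proof (induction J rule: finite_induct)
  case empty
  show ?case by (simp add: mat_alg_generate.one)
next
  case (insert j J)
  have "mat_diag n (\<lambda>l. d l - d j) = mat_diag n d + (- d j) \<cdot>\<^sub>m 1\<^sub>m n"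
    by (intro eq_matI) (auto simp: mat_diag_def)
  then have "mat_diag n (\<lambda>l. d l - d j) \<in> mat_alg_generate n T (mat_diag n d)"
    by (simp add: mat_alg_generate.intros)
  from mat_alg_generate.mult[OF this insert.IH] show ?case
    using insert.hyps by simp
qed

lemma mat_alg_generate_mat_unit_diag:
  fixes d :: "nat \<Rightarrow> 'a::field"
  assumes d: "inj_on d {..<n}" and i: "i < n"
  shows "mat_unit n i i \<in> mat_alg_generate n T (mat_diag n d)"
proof -
  define J where "J = {..<n} - {i}"
  define c where "c = (\<Prod>j\<in>J. d i - d j)"
  have "c \<noteq> 0"
    using d i by (auto simp: c_def J_def inj_on_def)
  have "(\<Prod>j\<in>J. d l - d j) = 0" if "l < n" "l \<noteq> i" for l
    using that by (auto simp: J_def)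
  then have "mat_unit n i i = (1 / c) \<cdot>\<^sub>m mat_diag n (\<lambda>l. \<Prod>j\<in>J. d l - d j)"
    using \<open>c \<noteq> 0\<close> by (intro eq_matI) (auto simp: mat_unit_def mat_diag_def c_def)
  then show ?thesis
    by (simp add: J_def mat_alg_generate.smult mat_alg_generate_mat_diag_prod)
qed

lemma mat_alg_generate_mat_unit:
  fixes T :: "'a::field mat"
  assumes T: "T \<in> carrier_mat n n" "irred_tridiagonal T" and d: "inj_on d {..<n}"
    and ij: "i < n" "j < n"
  shows "mat_unit n i j \<in> mat_alg_generate n T (mat_diag n d)"
proof -
  let ?G = "mat_alg_generate n T (mat_diag n d)"
  have unit_mem: "mat_unit n k l \<in> ?G" if "k < n" "l < n" "T $$ (k, l) \<noteq> 0" for k l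
  proof -
    have "mat_unit n k l = (1 / T $$ (k, l)) \<cdot>\<^sub>m (mat_unit n k k * T * mat_unit n l l)"
      using that by (simp add: mat_unit_mult_mult_mat_unit[OF T(1)]) (intro eq_matI, auto)
    then show ?thesis
      using that d by (simp add: mat_alg_generate.intros mat_alg_generate_mat_unit_diag)
  qed
  have "k < n \<longrightarrow> mat_unit n i k \<in> ?G \<and> mat_unit n k i \<in> ?G" if "i \<le> k" for i k
    using that
  proof (induction k rule: dec_induct)
    case base
    then show ?case using d by (simp add: mat_alg_generate_mat_unit_diag)
  next
    case (step k)
    show ?case
    proof
      assume k: "Suc k < n"
      then have "mat_unit n k (Suc k) \<in> ?G" "mat_unit n (Suc k) k \<in> ?G"
        using T by (auto intro!: unit_mem simp: irred_tridiagonal_def)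
      then show "mat_unit n i (Suc k) \<in> ?G \<and> mat_unit n (Suc k) i \<in> ?G"
        using step k mat_alg_generate.mult mat_unit_mult_mat_unit[of k n]
        by (metis Suc_lessD)
    qed
  qed
  then show ?thesis
    using ij by (cases "i \<le> j") auto
qed

fun tridiagonal_symmetrizer :: "'a::field mat \<Rightarrow> nat \<Rightarrow> 'a" where
  "tridiagonal_symmetrizer T 0 = 1"
| "tridiagonal_symmetrizer T (Suc i) =
     tridiagonal_symmetrizer T i * T $$ (Suc i, i) / T $$ (i, Suc i)"

lemma tridiagonal_symmetrizer_nonzero:
  assumes "irred_tridiagonal T" "i < dim_row T"
  shows "tridiagonal_symmetrizer T i \<noteq> 0"
  using assms by (induction i) (auto simp: irred_tridiagonal_def)

lemma tridiagonal_symmetrizer_transpose: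
  fixes T :: "'a::field mat"
  assumes T: "T \<in> carrier_mat n n" "irred_tridiagonal T"
  shows "mat_diag n (tridiagonal_symmetrizer T) * T\<^sup>T = T * mat_diag n (tridiagonal_symmetrizer T)"
proof -
  let ?m = "tridiagonal_symmetrizer T"
  have "?m i * T $$ (j, i) = T $$ (i, j) * ?m j" if "i < n" "j < n" for i j
  proof -
    consider "j = Suc i" | "i = Suc j" | "i = j" | "i + 1 < j \<or> j + 1 < i"
      by linarith
    then show ?thesis
    proof cases
      case 1
      then have "T $$ (i, j) \<noteq> 0" using T that by (auto simp: irred_tridiagonal_def)
      then show ?thesis using 1 by simp
    next
      case 2
      then have "T $$ (j, i) \<noteq> 0" using T that by (auto simp: irred_tridiagonal_def)
      then show ?thesis using 2 by simp
    qed (use T that in \<open>auto simp: irred_tridiagonal_def\<close>)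
  qed
  then show ?thesis
    using T by (simp add: mat_diag_mult_left[of _ n n] mat_diag_mult_right[of _ n n]) (intro eq_matI, auto)
qed

lemma transpose_conj_involution:
  fixes R R' :: "'a::field mat"
  assumes R: "R \<in> carrier_mat n n" "R' \<in> carrier_mat n n" "R * R' = 1\<^sub>m n" "R' * R = 1\<^sub>m n"
    and sym: "R\<^sup>T = R" and X: "X \<in> carrier_mat n n"
  shows "R * (R * X\<^sup>T * R')\<^sup>T * R' = X"
proof -
  have "R'\<^sup>T * R = 1\<^sub>m n"
    using R sym transpose_mult[of R n n R'] by simp
  then have "R'\<^sup>T = R'"
    using R inverse_mult_cancel_left[of "R'\<^sup>T" n R R'] by simp
  then have transp: "(R * X\<^sup>T * R')\<^sup>T = R' * X * R"
    using R X sym by (simp add: transpose_mult[of _ n n _ n] assoc_mult_mat[of _ n n _ n _ n])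
  show ?thesis
    unfolding transp by (rule conj_mult_cancel[OF R(1,2) X R(3)])
qed

lemma transpose_conj_antiautomorphism:
  fixes R R' :: "'a::field mat"
  assumes R: "R \<in> carrier_mat n n" "R' \<in> carrier_mat n n" "R * R' = 1\<^sub>m n" "R' * R = 1\<^sub>m n"
    and sym: "R\<^sup>T = R"
  shows "antiautomorphism n (\<lambda>X. R * X\<^sup>T * R')"
  unfolding antiautomorphism_def
proof (intro conjI ballI allI)
  let ?g = "\<lambda>X. R * X\<^sup>T * R'"
  show "bij_betw ?g (carrier_mat n n) (carrier_mat n n)"
    by (rule bij_betwI[of ?g _ _ ?g]) (use R sym transpose_conj_involution[OF R sym] in auto)
next
  fix X Y :: "'a mat" assume X: "X \<in> carrier_mat n n" and Y: "Y \<in> carrier_mat n n"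
  show "R * (X + Y)\<^sup>T * R' = R * X\<^sup>T * R' + R * Y\<^sup>T * R'"
    using R X Y by (simp add: transpose_add mult_add_distrib_mat[of _ n n] add_mult_distrib_mat[of _ n n])
  show "R * (X * Y)\<^sup>T * R' = (R * Y\<^sup>T * R') * (R * X\<^sup>T * R')"
    using R X Y
    by (simp add: transpose_mult[of _ n n _ n] assoc_mult_mat[of _ n n _ n _ n] inverse_mult_cancel_left[of R' n R _ n])
next
  fix c and X :: "'a mat" assume X: "X \<in> carrier_mat n n"
  show "R * (c \<cdot>\<^sub>m X)\<^sup>T * R' = c \<cdot>\<^sub>m (R * X\<^sup>T * R')"
    using R X by (simp add: transpose_smult_mat mult_smult_distrib[of _ n n] mult_smult_assoc_mat[of _ n n])
qed

lemma transpose_conj_intertwines: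
  fixes P Q M Y :: "'a::comm_ring_1 mat"
  assumes carr: "P \<in> carrier_mat n n" "Q \<in> carrier_mat n n" "M \<in> carrier_mat n n" "Y \<in> carrier_mat n n"
    and QP: "Q * P = 1\<^sub>m n" and MY: "M * Y\<^sup>T = Y * M"
  shows "(P * M * P\<^sup>T) * (P * Y * Q)\<^sup>T = (P * Y * Q) * (P * M * P\<^sup>T)"
proof -
  have PQt: "P\<^sup>T * Q\<^sup>T = 1\<^sub>m n"
    using carr QP transpose_mult[of Q n n P n] by simp
  have "(P * M * P\<^sup>T) * (P * Y * Q)\<^sup>T = P * (M * Y\<^sup>T) * P\<^sup>T"
    using carr PQt by (simp add: transpose_mult[of _ n n _ n] assoc_mult_mat[of _ n n _ n _ n]
        inverse_mult_cancel_left[of "P\<^sup>T" n "Q\<^sup>T" _ n])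
  also have "\<dots> = (P * Y * Q) * (P * M * P\<^sup>T)"
    using carr QP by (simp add: MY assoc_mult_mat[of _ n n _ n _ n] inverse_mult_cancel_left[of Q n P _ n])
  finally show ?thesis .
qed

lemma transpose_conj_inverse:
  fixes P Q M M' :: "'a::comm_ring_1 mat"
  assumes carr: "P \<in> carrier_mat n n" "Q \<in> carrier_mat n n" "M \<in> carrier_mat n n" "M' \<in> carrier_mat n n"
    and inv: "P * Q = 1\<^sub>m n" "Q * P = 1\<^sub>m n" "M * M' = 1\<^sub>m n"
  shows "(P * M * P\<^sup>T) * (Q\<^sup>T * M' * Q) = 1\<^sub>m n"
proof -
  have PQt: "P\<^sup>T * Q\<^sup>T = 1\<^sub>m n"
    using carr inv transpose_mult[of Q n n P n] by simp
  show ?thesis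
    using carr inv PQt by (simp add: assoc_mult_mat[of _ n n _ n _ n]
        inverse_mult_cancel_left[of "P\<^sup>T" n "Q\<^sup>T" _ n] inverse_mult_cancel_left[of M n M' _ n])
qed

lemma leonard_pairE:
  fixes A As :: "'a::field mat"
  assumes "leonard_pair n A As"
  obtains P Q where "P \<in> carrier_mat n n" "Q \<in> carrier_mat n n" "P * Q = 1\<^sub>m n" "Q * P = 1\<^sub>m n"
    and "irred_tridiagonal (Q * A * P)" "diagonal_mat (Q * As * P)"
    and "inj_on (\<lambda>i. (Q * As * P) $$ (i, i)) {..<n}"
proof -
  obtain P Q where PQ: "P \<in> carrier_mat n n" "Q \<in> carrier_mat n n" "P * Q = 1\<^sub>m n" "Q * P = 1\<^sub>m n"
    and tri: "irred_tridiagonal (Q * A * P)" and diag: "diagonal_mat (Q * As * P)"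
    using assms unfolding leonard_pair_def inverts_mat_def by auto
  obtain P' Q' where PQ': "P' \<in> carrier_mat n n" "Q' \<in> carrier_mat n n" "P' * Q' = 1\<^sub>m n" "Q' * P' = 1\<^sub>m n"
    and tri': "irred_tridiagonal (Q' * As * P')"
    using assms unfolding leonard_pair_def inverts_mat_def by auto
  have As: "As \<in> carrier_mat n n"
    using assms unfolding leonard_pair_def by simp
  have "similar_mat (Q * As * P) As"
    by (rule similar_matI[of _ _ Q P n]) (use PQ As in auto)
  moreover have "similar_mat (Q' * As * P') As"
    by (rule similar_matI[of _ _ Q' P' n]) (use PQ' As in auto)
  ultimately have "similar_mat (Q * As * P) (Q' * As * P')"
    using similar_mat_sym similar_mat_trans by blast
  then have "(Q * As * P) $$ (a, a) \<noteq> (Q * As * P) $$ (b, b)" if "a < n" "b < n" "a \<noteq> b" for a b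
    using PQ As by (intro similar_irred_tridiagonal_diagonal_distinct[OF _ _ diag tri' that]) auto
  then have "inj_on (\<lambda>i. (Q * As * P) $$ (i, i)) {..<n}"
    by (intro inj_onI) (metis lessThan_iff)
  then show thesis
    using that PQ tri diag by blast
qed

lemma leonard_pair_generates:
  fixes A As :: "'a::field mat"
  assumes lp: "leonard_pair n A As"
  shows "carrier_mat n n \<subseteq> mat_alg_generate n A As"
proof
  fix X :: "'a mat" assume X: "X \<in> carrier_mat n n"
  obtain P Q where PQ: "P \<in> carrier_mat n n" "Q \<in> carrier_mat n n" "P * Q = 1\<^sub>m n" "Q * P = 1\<^sub>m n"
    and tri: "irred_tridiagonal (Q * A * P)" and diag: "diagonal_mat (Q * As * P)"
    and inj: "inj_on (\<lambda>i. (Q * As * P) $$ (i, i)) {..<n}"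
    using leonard_pairE[OF lp] by blast
  have A: "A \<in> carrier_mat n n" and As: "As \<in> carrier_mat n n"
    using lp unfolding leonard_pair_def by auto
  let ?T = "Q * A * P" and ?D = "Q * As * P"
  have D: "?D = mat_diag n (\<lambda>i. ?D $$ (i, i))"
    using PQ As diag by (intro diagonal_mat_eq_mat_diag) auto
  have "Q * X * P \<in> mat_alg_generate n ?T ?D"
    using carrier_mat_subset_mat_alg_generate[OF mat_alg_generate_mat_unit[OF _ tri inj]]
      PQ A X by (subst D) auto
  from mat_alg_generate_conj[OF PQ(1,2) _ _ PQ(3,4) this]
  have "P * (Q * X * P) * Q \<in> mat_alg_generate n (P * ?T * Q) (P * ?D * Q)"
    using PQ A As by auto
  then show "X \<in> mat_alg_generate n A As"
    by (simp only: conj_mult_cancel[OF PQ(1,2) _ PQ(3)] A As X)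
qed

lemma leonard_pair_transpose_similarity:
  fixes A As :: "'a::field mat"
  assumes lp: "leonard_pair n A As"
  obtains R R' where "R \<in> carrier_mat n n" "R' \<in> carrier_mat n n" "R * R' = 1\<^sub>m n" "R' * R = 1\<^sub>m n"
    and "R\<^sup>T = R" "R * A\<^sup>T = A * R" "R * As\<^sup>T = As * R"
proof -
  obtain P Q where PQ: "P \<in> carrier_mat n n" "Q \<in> carrier_mat n n" "P * Q = 1\<^sub>m n" "Q * P = 1\<^sub>m n"
    and tri: "irred_tridiagonal (Q * A * P)" and diag: "diagonal_mat (Q * As * P)"
    using leonard_pairE[OF lp] by blast
  have A: "A \<in> carrier_mat n n" and As: "As \<in> carrier_mat n n"
    using lp unfolding leonard_pair_def by auto
  define T where "T = Q * A * P"
  define d where "d i = (Q * As * P) $$ (i, i)" for i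
  define m where "m = tridiagonal_symmetrizer T"
  define M where "M = mat_diag n m"
  define M' where "M' = mat_diag n (\<lambda>i. 1 / m i)"
  have T: "T \<in> carrier_mat n n" "irred_tridiagonal T"
    using PQ A tri by (auto simp: T_def)
  have D: "Q * As * P = mat_diag n d"
    unfolding d_def using PQ As diag by (intro diagonal_mat_eq_mat_diag) auto
  have m: "m i \<noteq> 0" if "i < n" for i
    using tridiagonal_symmetrizer_nonzero[OF T(2)] T that by (simp add: m_def)
  have MM': "M * M' = 1\<^sub>m n" "M' * M = 1\<^sub>m n"
    unfolding M_def M'_def by (simp_all only: mat_diag_mult_mat_diag_inverse[OF m])
  have Mc: "M \<in> carrier_mat n n" and Mt: "M\<^sup>T = M"
    by (simp_all add: M_def)
  have A_eq: "A = P * T * Q"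
    unfolding T_def by (rule conj_mult_cancel[OF PQ(1,2) A PQ(3), symmetric])
  have As_eq: "As = P * mat_diag n d * Q"
    unfolding D[symmetric] by (rule conj_mult_cancel[OF PQ(1,2) As PQ(3), symmetric])
  let ?R = "P * M * P\<^sup>T" and ?R' = "Q\<^sup>T * M' * Q"
  show thesis
  proof (rule that)
    show "?R * ?R' = 1\<^sub>m n" "?R' * ?R = 1\<^sub>m n"
      using PQ MM' transpose_conj_inverse[of P n Q M M'] transpose_conj_inverse[of "Q\<^sup>T" n "P\<^sup>T" M' M]
      by (auto simp: M_def M'_def transpose_mult[of _ n n _ n, symmetric])
    show "?R\<^sup>T = ?R"
      using PQ Mt Mc by (simp add: transpose_mult[of _ n n _ n] assoc_mult_mat[of _ n n _ n _ n])
    show "?R * A\<^sup>T = A * ?R"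
      unfolding A_eq using PQ T tridiagonal_symmetrizer_transpose[OF T]
      by (intro transpose_conj_intertwines) (auto simp: M_def m_def)
    show "?R * As\<^sup>T = As * ?R"
      unfolding As_eq using PQ
      by (intro transpose_conj_intertwines) (simp_all add: M_def mult.commute)
  qed (use PQ in \<open>auto simp: M_def M'_def\<close>)
qed

theorem theorem6p1:
  fixes d :: nat and A As :: "'a::field mat"
  assumes "leonard_pair (d + 1) A As"
  shows "\<exists>g. antiautomorphism (d + 1) g \<and> g A = A \<and> g As = As \<and>
            (\<forall>h. antiautomorphism (d + 1) h \<and> h A = A \<and> h As = As \<longrightarrow>
                 (\<forall>X\<in>carrier_mat (d + 1) (d + 1). h X = g X)) \<and>
            (\<forall>X\<in>carrier_mat (d + 1) (d + 1). g (g X) = X)"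
proof -
  let ?n = "d + 1"
  obtain R R' where R: "R \<in> carrier_mat ?n ?n" "R' \<in> carrier_mat ?n ?n" "R * R' = 1\<^sub>m ?n" "R' * R = 1\<^sub>m ?n"
    and sym: "R\<^sup>T = R" and RA: "R * A\<^sup>T = A * R" "R * As\<^sup>T = As * R"
    using leonard_pair_transpose_similarity[OF assms] by blast
  have A: "A \<in> carrier_mat ?n ?n" "As \<in> carrier_mat ?n ?n"
    using assms unfolding leonard_pair_def by auto
  define g where "g X = R * X\<^sup>T * R'" for X
  have anti: "antiautomorphism ?n g"
    unfolding g_def by (rule transpose_conj_antiautomorphism[OF R sym])
  have g_fixes: "g A = A" "g As = As"
    unfolding g_def using R A by (simp_all add: RA assoc_mult_mat[of _ ?n ?n _ ?n _ ?n])
  have "h X = g X" if "antiautomorphism ?n h" "h A = A" "h As = As" "X \<in> carrier_mat ?n ?n" for h X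
    using antiautomorphisms_eq_on_generate[OF that(1) anti A] that g_fixes
      leonard_pair_generates[OF assms] by auto
  moreover have "g (g X) = X" if "X \<in> carrier_mat ?n ?n" for X
    unfolding g_def by (rule transpose_conj_involution[OF R sym that])
  ultimately show ?thesis
    using anti g_fixes by blast
qed

end
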